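(* Let $m\ge 2$, $h\ge 1$ be integers and $q=2^m$. Index the coordinates of vectors in $\mathrm{GF}(2^h)^{q+1}$ by the points of the projective line $\mathrm{PG}(1,q)=\mathrm{GF}(q)\cup\{\infty\}$, and let $\mathrm{PGL}_2(\mathrm{GF}(q))$ act on $\mathrm{GF}(2^h)^{q+1}$ by $\pi:(c_x)_{x\in \mathrm{PG}(1,q)}\mapsto (c_{\pi(x)})_{x\in\mathrm{PG}(1,q)}$. If $\mathcal C$ is a linear code over $\mathrm{GF}(2^h)$ of length $q+1$ that is invariant under this action (i.e. $\pi(\mathbf c)\in\mathcal C$ for all $\mathbf c\in\mathcal C$, $\pi\in\mathrm{PGL}_2(\mathrm{GF}(q))$), then $\mathcal C$ is one of the following: (I) the zero code $\{(0,\dots,0)\}$; (II) the whole space $\mathrm{GF}(2^h)^{q+1}$; (III) the repetition code $\{(c,c,\dots,c): c\in\mathrm{GF}(2^h)\}$; (IV) the code $\{(c_0,\dots,c_q)\in\mathrm{GF}(2^h)^{q+1}: c_0+\cdots+c_q=0\}$.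
   Context: $\mathrm{PGL}_2(\mathrm{GF}(q))$ acts on $\mathrm{PG}(1,q)$ by linear fractional transformations $x\mapsto \frac{ax+b}{cx+d}$ ($ad-bc\neq 0$), with the usual conventions for $\infty$. *)

theory Defs
  imports Main
begin

text \<open>The projective line PG(1,q) over a field 'q is modelled as 'q option,
  with None playing the role of the point at infinity.\<close>

definition lft :: "'q::field \<Rightarrow> 'q \<Rightarrow> 'q \<Rightarrow> 'q \<Rightarrow> 'q option \<Rightarrow> 'q option" where
  "lft a b c d x = (case x of
      None \<Rightarrow> (if c = 0 then None else Some (a / c))
    | Some t \<Rightarrow> (if c * t + d = 0 then None else Some ((a * t + b) / (c * t + d))))"

definition PGL2 :: "('q::field option \<Rightarrow> 'q option) set" where
  "PGL2 = {lft a b c d | a b c d. a * d - b * c \<noteq> 0}"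

definition linear_code :: "('i \<Rightarrow> 'f::field) set \<Rightarrow> bool" where
  "linear_code C \<longleftrightarrow> (\<lambda>_. 0) \<in> C \<and>
     (\<forall>u\<in>C. \<forall>v\<in>C. (\<lambda>x. u x + v x) \<in> C) \<and>
     (\<forall>k. \<forall>u\<in>C. (\<lambda>x. k * u x) \<in> C)"

end

theory Submission
  imports Defs "HOL-Number_Theory.Residues" "HOL-Computational_Algebra.Euclidean_Algorithm"
begin

text \<open>If some codeword has nonzero sum \<open>s\<close> over the affine points, averaging its translates
  \<open>x \<mapsto> x + b\<close> gives \<open>s\<close> on every affine point and \<open>q \<cdot> c\<^sub>\<infinity> = 0\<close> at infinity, as \<open>q\<close> is even.
  So \<open>\<one> - e\<^sub>\<infinity>\<close> is a codeword, and by transitivity of \<open>PGL\<^sub>2(q)\<close> so is every \<open>\<one> - e\<^sub>p\<close>;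
  these span the sum-zero hyperplane, leaving only (II) and (IV). Otherwise every codeword has
  affine sum zero, and comparing this with the affine sum of its image under \<open>x \<mapsto> 1/x\<close> gives
  \<open>c\<^sub>\<infinity> = c\<^sub>0\<close>; translating, every codeword is constant, leaving (I) and (III).\<close>

lemma CHAR_eq_2_if_card_power_of_2:
  assumes "card (UNIV :: 'f::{field,finite} set) = 2 ^ h"
  shows "CHAR('f) = 2"
proof -
  have "prime CHAR('f)"
    by (simp add: prime_CHAR_semidom finite_imp_CHAR_pos)
  moreover have "CHAR('f) dvd 2 ^ h"
    using CHAR_dvd_CARD[where 'a='f] assms by simp
  ultimately show ?thesis
    by (metis prime_dvd_power primes_dvd_imp_eq two_is_prime_nat)
qed

context
  fixes C :: "('i \<Rightarrow> 'f::field) set"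
  assumes linear: "linear_code C"
begin

lemma linear_code_zero: "(\<lambda>_. 0) \<in> C"
  using linear by (simp add: linear_code_def)

lemma linear_code_add: "u \<in> C \<Longrightarrow> v \<in> C \<Longrightarrow> (\<lambda>x. u x + v x) \<in> C"
  using linear by (simp add: linear_code_def)

lemma linear_code_scale: "v \<in> C \<Longrightarrow> (\<lambda>x. k * v x) \<in> C"
  using linear by (simp add: linear_code_def)

lemma linear_code_sum:
  assumes "finite A" and "\<And>a. a \<in> A \<Longrightarrow> g a \<in> C"
  shows "(\<lambda>x. \<Sum>a\<in>A. g a x) \<in> C"
  using assms by (induction A rule: finite_induct) (auto intro: linear_code_zero linear_code_add)

lemma linear_code_eq_constants:
  assumes const: "\<And>v x y. v \<in> C \<Longrightarrow> v x = v y"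
  shows "C = {\<lambda>_. 0} \<or> C = {(\<lambda>_. k) | k. True}"
proof (cases "C = {\<lambda>_. 0}")
  case False
  then obtain v x0 where v: "v \<in> C" and "v x0 \<noteq> 0"
    using linear_code_zero by fastforce
  have v_eq: "v = (\<lambda>_. v x0)"
    using const[OF v] by blast
  have "(\<lambda>_. k) \<in> C" for k
    using linear_code_scale[OF v, of "k / v x0"] \<open>v x0 \<noteq> 0\<close> by (subst (asm) v_eq) simp
  moreover have "\<exists>k. v = (\<lambda>_. k)" if "v \<in> C" for v
    using const[OF that] by blast
  ultimately show ?thesis
    by blast
qed simp

lemma linear_code_sum_zero_subset:
  assumes "finite (UNIV :: 'i set)"
    and complements: "\<And>p. (\<lambda>x. if x = p then 0 else 1) \<in> C"
  shows "{v. (\<Sum>x\<in>UNIV. v x) = 0} \<subseteq> C"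
proof clarify
  fix v :: "'i \<Rightarrow> 'f"
  assume sum_v: "(\<Sum>x\<in>UNIV. v x) = 0"
  have "(\<lambda>x. \<Sum>p\<in>UNIV. - v p * (if x = p then 0 else 1)) \<in> C"
    by (intro linear_code_sum assms(1) linear_code_scale complements)
  moreover have "(\<Sum>p\<in>UNIV. - v p * (if x = p then 0 else 1)) = v x" for x
  proof -
    have "(\<Sum>p\<in>UNIV. - v p * (if x = p then 0 else 1))
        = (\<Sum>p\<in>UNIV. - v p) - (\<Sum>p\<in>UNIV. if x = p then - v p else 0)"
      by (subst sum_subtractf[symmetric]) (intro sum.cong, auto)
    then show ?thesis
      using sum_v assms(1) by (simp add: sum_negf)
  qed
  ultimately show "v \<in> C"
    by simp
qed

lemma linear_code_supset_sum_zero: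
  assumes "{v. (\<Sum>x\<in>UNIV. v x) = 0} \<subseteq> C"
  shows "C = {v. (\<Sum>x\<in>UNIV. v x) = 0} \<or> C = UNIV"
proof (cases "C = {v. (\<Sum>x\<in>UNIV. v x) = 0}")
  case False
  then obtain g where g: "g \<in> C" and sum_g: "(\<Sum>x\<in>UNIV. g x) \<noteq> 0"
    using assms by blast
  have "v \<in> C" for v
  proof -
    define c where "c = (\<Sum>x\<in>UNIV. v x) / (\<Sum>x\<in>UNIV. g x)"
    have "(\<Sum>x\<in>UNIV. v x - c * g x) = 0"
      using sum_g unfolding sum_subtractf sum_distrib_left[symmetric] c_def by simp
    then have "(\<lambda>x. v x - c * g x) \<in> C"
      using assms by blast
    from linear_code_add[OF this linear_code_scale[OF g, of c]] show "v \<in> C"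
      by simp
  qed
  then show ?thesis
    by blast
qed simp

end

lemma lft_translation [simp]:
  "lft 1 b 0 1 None = None"
  "lft 1 b 0 1 (Some t) = Some (t + b)"
  by (simp_all add: lft_def add.commute)

lemma lft_inversion [simp]:
  "lft 0 1 1 (- s) None = Some 0"
  "lft 0 1 1 (- s) (Some t) = (if t = s then None else Some (inverse (t - s)))"
  by (simp_all add: lft_def field_simps)

lemma translation_in_PGL2: "lft 1 b 0 1 \<in> PGL2"
  unfolding PGL2_def by force

lemma inversion_in_PGL2: "lft 0 1 1 (- s) \<in> PGL2"
  unfolding PGL2_def by force

lemma sum_UNIV_inverse:
  fixes g :: "'q::{field,finite} \<Rightarrow> 'f::comm_monoid_add"
  shows "(\<Sum>t\<in>UNIV. g (inverse t)) = (\<Sum>t\<in>UNIV. g t)"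
  by (rule sum.reindex_bij_witness[where i=inverse and j=inverse]) auto

lemma sum_UNIV_translate:
  fixes g :: "'q::{ab_group_add,finite} \<Rightarrow> 'f::comm_monoid_add"
  shows "(\<Sum>b\<in>UNIV. g (t + b)) = (\<Sum>b\<in>UNIV. g b)"
  by (rule sum.reindex_bij_witness[where i="\<lambda>b. b - t" and j="\<lambda>b. t + b"]) auto

definition affine_sum :: "('q::finite option \<Rightarrow> 'f::comm_monoid_add) \<Rightarrow> 'f" where
  "affine_sum v = (\<Sum>t\<in>UNIV. v (Some t))"

locale PGL2_invariant_code =
  fixes C :: "('q::{field,finite} option \<Rightarrow> 'f::field) set"
  assumes linear: "linear_code C"
    and invariant: "\<And>\<pi> v. \<pi> \<in> PGL2 \<Longrightarrow> v \<in> C \<Longrightarrow> (\<lambda>x. v (\<pi> x)) \<in> C"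
begin

lemma infinity_eq_origin_if_affine_sums_vanish:
  assumes vanish: "\<And>w. w \<in> C \<Longrightarrow> affine_sum w = 0" and v: "v \<in> C"
  shows "v None = v (Some 0)"
proof -
  let ?w = "\<lambda>x. v (lft 0 1 1 (- 0) x)"
  have "affine_sum ?w
      = (\<Sum>t\<in>UNIV. (if t = 0 then v None - v (Some (inverse t)) else 0) + v (Some (inverse t)))"
    unfolding affine_sum_def by (intro sum.cong) (auto simp: lft_inversion[of 0, simplified])
  also have "\<dots> = v None - v (Some 0) + affine_sum v"
    by (simp add: sum.distrib sum_UNIV_inverse[of "\<lambda>t. v (Some t)"] affine_sum_def)
  finally show ?thesis
    using vanish[OF v] vanish[OF invariant[OF inversion_in_PGL2[of 0] v]] by simp
qed

lemma constant_if_affine_sums_vanish: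
  assumes vanish: "\<And>w. w \<in> C \<Longrightarrow> affine_sum w = 0" and v: "v \<in> C"
  shows "v x = v None"
proof (cases x)
  case (Some b)
  with infinity_eq_origin_if_affine_sums_vanish[OF vanish invariant[OF translation_in_PGL2 v]]
  show ?thesis
    by simp
qed simp

lemma translation_average_mem:
  assumes char: "of_nat (card (UNIV :: 'q set)) = (0 :: 'f)" and v: "v \<in> C"
  shows "(\<lambda>x. if x = None then 0 else affine_sum v) \<in> C"
proof -
  have "(\<lambda>x. \<Sum>b\<in>UNIV. v (lft 1 b 0 1 x)) \<in> C"
    by (intro linear_code_sum[OF linear] finite_UNIV invariant[OF translation_in_PGL2 v])
  moreover have "(\<Sum>b\<in>UNIV. v (lft 1 b 0 1 x)) = (if x = None then 0 else affine_sum v)" for x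
    using char by (cases x) (simp_all add: affine_sum_def sum_UNIV_translate[of "\<lambda>b. v (Some b)"])
  ultimately show ?thesis
    by simp
qed

lemma point_complement_mem:
  assumes "(\<lambda>x. if x = None then 0 else 1) \<in> C"
  shows "(\<lambda>x. if x = p then 0 else 1) \<in> C"
proof (cases p)
  case (Some s)
  have "(\<lambda>x. if lft 0 1 1 (- s) x = None then 0 else 1) \<in> C"
    using invariant[OF inversion_in_PGL2 assms] .
  moreover have "(\<lambda>x. if lft 0 1 1 (- s) x = None then 0 else 1) = (\<lambda>x. if x = p then 0 else (1 :: 'f))"
  proof
    show "(if lft 0 1 1 (- s) x = None then 0 else 1) = (if x = p then 0 else (1 :: 'f))" for x
      using Some by (cases x) auto
  qed
  ultimately show ?thesis
    by simp
qed (use assms in simp)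

lemma sum_zero_code_subset:
  assumes char: "of_nat (card (UNIV :: 'q set)) = (0 :: 'f)" and v: "v \<in> C" and "affine_sum v \<noteq> 0"
  shows "{w. (\<Sum>x\<in>UNIV. w x) = 0} \<subseteq> C"
proof -
  have "(\<lambda>x. inverse (affine_sum v) * (if x = None then 0 else affine_sum v)) \<in> C"
    by (intro linear_code_scale[OF linear] translation_average_mem char v)
  moreover have "(\<lambda>x :: 'q option. inverse (affine_sum v) * (if x = None then 0 else affine_sum v))
      = (\<lambda>x. if x = None then 0 else 1)"
    using \<open>affine_sum v \<noteq> 0\<close> by (intro ext) simp
  ultimately have "(\<lambda>x. if x = None then 0 else 1) \<in> C"
    by simp
  then have "(\<lambda>x. if x = p then 0 else 1) \<in> C" for p
    by (rule point_complement_mem)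
  then show ?thesis
    by (rule linear_code_sum_zero_subset[OF linear finite_UNIV])
qed

theorem classification:
  assumes "of_nat (card (UNIV :: 'q set)) = (0 :: 'f)"
  shows "C = {\<lambda>_. 0} \<or> C = UNIV \<or> C = {(\<lambda>_. k) | k. True} \<or> C = {v. (\<Sum>x\<in>UNIV. v x) = 0}"
proof (cases "\<forall>v\<in>C. affine_sum v = 0")
  case True
  then have "v x = v y" if "v \<in> C" for v x y
    using constant_if_affine_sums_vanish that by metis
  then show ?thesis
    using linear_code_eq_constants[OF linear] by blast
next
  case False
  then show ?thesis
    using sum_zero_code_subset[OF assms] linear_code_supset_sum_zero[OF linear] by blast
qed

end

theorem theorem11:
  fixes m h :: nat
    and C :: "('q::{field,finite} option \<Rightarrow> 'f::{field,finite}) set"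
  assumes "m \<ge> 2" and "h \<ge> 1"
    and "card (UNIV :: 'q set) = 2 ^ m" and "card (UNIV :: 'f set) = 2 ^ h"
    and "linear_code C"
    and "\<forall>\<pi>\<in>PGL2. \<forall>v\<in>C. (\<lambda>x. v (\<pi> x)) \<in> C"
  shows "C = {(\<lambda>_. 0)} \<or> C = UNIV \<or> C = {(\<lambda>_. k) | k. True}
         \<or> C = {v. (\<Sum>x\<in>UNIV. v x) = 0}"
proof -
  interpret PGL2_invariant_code C
    using assms(5,6) by unfold_locales blast+
  have "CHAR('f) dvd card (UNIV :: 'q set)"
    using CHAR_eq_2_if_card_power_of_2[OF assms(4)] assms(1,3) by (simp add: dvd_power)
  then show ?thesis
    by (intro classification) (simp add: of_nat_eq_0_iff_char_dvd del: of_nat_power)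
qed

end
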